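(* There is no universal first-order sentence $\varphi$ in the language of residuation algebras (and indeed none in the language of residuated lattices) such that for every residuation algebra $\mathbb{A}$ (resp. residuated lattice), $\mathbb{A}\models\varphi$ if and only if the dual structure $\mathbb{A}^\delta_+$ is functional. In particular, the complex algebra $(\mathcal{P}(\mathbb{Z}_3),\cap,\cup,\cdot,\backslash,/,\{0\})$ of the group $\mathbb{Z}_3$ has a functional (indeed total) dual structure, while its subalgebra with universe $\{\emptyset,\{0\},\{1,2\},\mathbb{Z}_3\}$ does not.
   Context: A residuation algebra is a structure $(A,\backslash,/)$ where $A$ is a bounded distributive lattice and $\backslash,/$ are binary operations on $A$ such that $\backslash$ preserves finite (including empty) meets in its second coordinate, $/$ preserves finite (including empty) meets in its first coordinate, and for all $a,b,c\in A$: $b\leq a\backslash c$ iff $a\leq c/b$; its language consists of the bounded lattice operations together with $\backslash$ and $/$. The canonical extension $A^\delta$ of $A$ is the dense and compact completion of $A$ (for finite $A$, $A^\delta=A$). The $\pi$-extensions $\backslash^\pi,/^\pi$ of $\backslash,/$ are defined by: for $k$ a meet of elements of $A$ and $o$ a join of elements of $A$, $k\backslash^\pi o=\bigvee\{a\backslash b\mid a,b\in A, k\leq a, b\leq o\}$, extended to arbitrary $u,v$ by $u\backslash^\pi v=\bigwedge\{k\backslash^\pi o\mid k\leq u, v\leq o\}$, and symmetrically for $/$. The product $\cdot$ on $A^\delta$ is the operation with $v\leq u\backslash^\pi w$ iff $u\cdot v\leq w$ iff $u\leq w/^\pi v$. $J^\infty(A^\delta)$ is the set of completely join-irreducible elements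 of $A^\delta$. $\mathbb{A}^\delta_+$ is functional if $y\cdot z\in J^\infty(A^\delta)\cup\{\bot\}$ for all $y,z\in J^\infty(A^\delta)$, and total if $y\cdot z\in J^\infty(A^\delta)$ for all such $y,z$. In the complex algebra of $\mathbb{Z}_3$: $X\cdot Y=\{x+y\mid x\in X,y\in Y\}$, $X\backslash Y=\{c\mid X\cdot\{c\}\subseteq Y\}$, $X/Y=\{c\mid\{c\}\cdot Y\subseteq X\}$. *)

theory Defs
  imports Main
begin

record 'a ra =
  carrier :: "'a set"
  r_meet :: "'a \<Rightarrow> 'a \<Rightarrow> 'a"
  r_join :: "'a \<Rightarrow> 'a \<Rightarrow> 'a"
  r_bot  :: 'a
  r_top  :: 'a
  r_ldiv :: "'a \<Rightarrow> 'a \<Rightarrow> 'a"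
  r_rdiv :: "'a \<Rightarrow> 'a \<Rightarrow> 'a"

record 'a rl = "'a ra" +
  r_mult :: "'a \<Rightarrow> 'a \<Rightarrow> 'a"
  r_one  :: 'a

definition r_le :: "('a,'b) ra_scheme \<Rightarrow> 'a \<Rightarrow> 'a \<Rightarrow> bool" where
  "r_le A x y \<longleftrightarrow> r_meet A x y = x"

definition bounded_distrib_lattice :: "('a,'b) ra_scheme \<Rightarrow> bool" where
  "bounded_distrib_lattice A \<longleftrightarrow>
     (let C = carrier A; m = r_meet A; j = r_join A in
       r_bot A \<in> C \<and> r_top A \<in> C \<and>
       (\<forall>x\<in>C. \<forall>y\<in>C. m x y \<in> C \<and> j x y \<in> C) \<and>
       (\<forall>x\<in>C. \<forall>y\<in>C. \<forall>z\<in>C. m x (m y z) = m (m x y) z \<and> j x (j y z) = j (j x y) z) \<and>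
       (\<forall>x\<in>C. \<forall>y\<in>C. m x y = m y x \<and> j x y = j y x) \<and>
       (\<forall>x\<in>C. \<forall>y\<in>C. m x (j x y) = x \<and> j x (m x y) = x) \<and>
       (\<forall>x\<in>C. \<forall>y\<in>C. \<forall>z\<in>C. m x (j y z) = j (m x y) (m x z)) \<and>
       (\<forall>x\<in>C. j x (r_bot A) = x \<and> m x (r_top A) = x))"

definition residuation_algebra :: "('a,'b) ra_scheme \<Rightarrow> bool" where
  "residuation_algebra A \<longleftrightarrow>
     bounded_distrib_lattice A \<and>
     (\<forall>x\<in>carrier A. \<forall>y\<in>carrier A. r_ldiv A x y \<in> carrier A \<and> r_rdiv A x y \<in> carrier A) \<and>
     \<comment> \<open>\<open>\<backslash>\<close> preserves finite (incl. empty) meets in its second coordinate\<close>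
     (\<forall>a\<in>carrier A. r_ldiv A a (r_top A) = r_top A) \<and>
     (\<forall>a\<in>carrier A. \<forall>b\<in>carrier A. \<forall>c\<in>carrier A.
        r_ldiv A a (r_meet A b c) = r_meet A (r_ldiv A a b) (r_ldiv A a c)) \<and>
     \<comment> \<open>\<open>/\<close> preserves finite (incl. empty) meets in its first coordinate\<close>
     (\<forall>a\<in>carrier A. r_rdiv A (r_top A) a = r_top A) \<and>
     (\<forall>a\<in>carrier A. \<forall>b\<in>carrier A. \<forall>c\<in>carrier A.
        r_rdiv A (r_meet A b c) a = r_meet A (r_rdiv A b a) (r_rdiv A c a)) \<and>
     \<comment> \<open>residuation law\<close>
     (\<forall>a\<in>carrier A. \<forall>b\<in>carrier A. \<forall>c\<in>carrier A.
        r_le A b (r_ldiv A a c) \<longleftrightarrow> r_le A a (r_rdiv A c b))"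

definition residuated_lattice :: "'a rl \<Rightarrow> bool" where
  "residuated_lattice A \<longleftrightarrow>
     bounded_distrib_lattice A \<and>
     (\<forall>x\<in>carrier A. \<forall>y\<in>carrier A. r_ldiv A x y \<in> carrier A \<and> r_rdiv A x y \<in> carrier A
        \<and> r_mult A x y \<in> carrier A) \<and>
     r_one A \<in> carrier A \<and>
     (\<forall>x\<in>carrier A. \<forall>y\<in>carrier A. \<forall>z\<in>carrier A.
        r_mult A x (r_mult A y z) = r_mult A (r_mult A x y) z) \<and>
     (\<forall>x\<in>carrier A. r_mult A (r_one A) x = x \<and> r_mult A x (r_one A) = x) \<and>
     (\<forall>x\<in>carrier A. \<forall>y\<in>carrier A. \<forall>z\<in>carrier A.
        (r_le A (r_mult A x y) z \<longleftrightarrow> r_le A y (r_ldiv A x z)) \<and>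
        (r_le A (r_mult A x y) z \<longleftrightarrow> r_le A x (r_rdiv A z y)))"

datatype rterm = RVar nat | RBot | RTop | RMeet rterm rterm | RJoin rterm rterm
  | RLdiv rterm rterm | RRdiv rterm rterm

datatype lterm = LVar nat | LBot | LTop | LMeet lterm lterm | LJoin lterm lterm
  | LLdiv lterm lterm | LRdiv lterm lterm | LMult lterm lterm | LOne

text \<open>A universal sentence \<open>\<forall>x\<^sub>1\<dots>x\<^sub>n. \<psi>\<close> is represented by its quantifier-free matrix \<open>\<psi>\<close>,
  all of whose variables are read universally.\<close>
datatype 't qf = Eq 't 't | Neg "'t qf" | Conj "'t qf" "'t qf" | Disj "'t qf" "'t qf"

primrec eval_r :: "('a,'b) ra_scheme \<Rightarrow> (nat \<Rightarrow> 'a) \<Rightarrow> rterm \<Rightarrow> 'a" where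
  "eval_r A \<rho> (RVar n) = \<rho> n"
| "eval_r A \<rho> RBot = r_bot A"
| "eval_r A \<rho> RTop = r_top A"
| "eval_r A \<rho> (RMeet s t) = r_meet A (eval_r A \<rho> s) (eval_r A \<rho> t)"
| "eval_r A \<rho> (RJoin s t) = r_join A (eval_r A \<rho> s) (eval_r A \<rho> t)"
| "eval_r A \<rho> (RLdiv s t) = r_ldiv A (eval_r A \<rho> s) (eval_r A \<rho> t)"
| "eval_r A \<rho> (RRdiv s t) = r_rdiv A (eval_r A \<rho> s) (eval_r A \<rho> t)"

primrec eval_l :: "'a rl \<Rightarrow> (nat \<Rightarrow> 'a) \<Rightarrow> lterm \<Rightarrow> 'a" where
  "eval_l A \<rho> (LVar n) = \<rho> n"
| "eval_l A \<rho> LBot = r_bot A"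
| "eval_l A \<rho> LTop = r_top A"
| "eval_l A \<rho> (LMeet s t) = r_meet A (eval_l A \<rho> s) (eval_l A \<rho> t)"
| "eval_l A \<rho> (LJoin s t) = r_join A (eval_l A \<rho> s) (eval_l A \<rho> t)"
| "eval_l A \<rho> (LLdiv s t) = r_ldiv A (eval_l A \<rho> s) (eval_l A \<rho> t)"
| "eval_l A \<rho> (LRdiv s t) = r_rdiv A (eval_l A \<rho> s) (eval_l A \<rho> t)"
| "eval_l A \<rho> (LMult s t) = r_mult A (eval_l A \<rho> s) (eval_l A \<rho> t)"
| "eval_l A \<rho> LOne = r_one A"

primrec holds :: "('t \<Rightarrow> 'a) \<Rightarrow> 't qf \<Rightarrow> bool" where
  "holds e (Eq s t) = (e s = e t)"
| "holds e (Neg \<phi>) = (\<not> holds e \<phi>)"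
| "holds e (Conj \<phi> \<psi>) = (holds e \<phi> \<and> holds e \<psi>)"
| "holds e (Disj \<phi> \<psi>) = (holds e \<phi> \<or> holds e \<psi>)"

definition models_univ_r :: "('a,'b) ra_scheme \<Rightarrow> rterm qf \<Rightarrow> bool" where
  "models_univ_r A \<phi> \<longleftrightarrow> (\<forall>\<rho>. (\<forall>n. \<rho> n \<in> carrier A) \<longrightarrow> holds (eval_r A \<rho>) \<phi>)"

definition models_univ_l :: "'a rl \<Rightarrow> lterm qf \<Rightarrow> bool" where
  "models_univ_l A \<phi> \<longleftrightarrow> (\<forall>\<rho>. (\<forall>n. \<rho> n \<in> carrier A) \<longrightarrow> holds (eval_l A \<rho>) \<phi>)"

definition prime_filters :: "('a,'b) ra_scheme \<Rightarrow> 'a set set" where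
  "prime_filters A = {F. F \<subseteq> carrier A \<and> r_top A \<in> F \<and> r_bot A \<notin> F \<and>
      (\<forall>x\<in>F. \<forall>y\<in>carrier A. r_le A x y \<longrightarrow> y \<in> F) \<and>
      (\<forall>x\<in>F. \<forall>y\<in>F. r_meet A x y \<in> F) \<and>
      (\<forall>x\<in>carrier A. \<forall>y\<in>carrier A. r_join A x y \<in> F \<longrightarrow> x \<in> F \<or> y \<in> F)}"

text \<open>The canonical extension \<open>A\<^sup>\<delta>\<close> is realised as the complete lattice (ordered by inclusion)
  of up-sets of the poset of prime filters; \<open>A\<close> embeds via \<open>emb\<close>.\<close>
definition cext :: "('a,'b) ra_scheme \<Rightarrow> 'a set set set" where
  "cext A = {U. U \<subseteq> prime_filters A \<and>
      (\<forall>F\<in>U. \<forall>G\<in>prime_filters A. F \<subseteq> G \<longrightarrow> G \<in> U)}"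

definition emb :: "('a,'b) ra_scheme \<Rightarrow> 'a \<Rightarrow> 'a set set" where
  "emb A a = {F \<in> prime_filters A. a \<in> F}"

definition closed_elts :: "('a,'b) ra_scheme \<Rightarrow> 'a set set set" where
  "closed_elts A = {prime_filters A \<inter> (\<Inter>a\<in>S. emb A a) | S. S \<subseteq> carrier A}"

definition open_elts :: "('a,'b) ra_scheme \<Rightarrow> 'a set set set" where
  "open_elts A = {(\<Union>a\<in>S. emb A a) | S. S \<subseteq> carrier A}"

definition ldiv_pi_KO :: "('a,'b) ra_scheme \<Rightarrow> 'a set set \<Rightarrow> 'a set set \<Rightarrow> 'a set set" where
  "ldiv_pi_KO A k op = \<Union>{emb A (r_ldiv A a b) | a b.
      a \<in> carrier A \<and> b \<in> carrier A \<and> k \<subseteq> emb A a \<and> emb A b \<subseteq> op}"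

definition ldiv_pi :: "('a,'b) ra_scheme \<Rightarrow> 'a set set \<Rightarrow> 'a set set \<Rightarrow> 'a set set" where
  "ldiv_pi A u v = prime_filters A \<inter> \<Inter>{ldiv_pi_KO A k op | k op.
      k \<in> closed_elts A \<and> op \<in> open_elts A \<and> k \<subseteq> u \<and> v \<subseteq> op}"

text \<open>The product on \<open>A\<^sup>\<delta>\<close>: the lower adjoint, \<open>u \<cdot> v \<le> w \<longleftrightarrow> v \<le> u \<backslash>\<^sup>\<pi> w\<close>, given by the
  meet of all \<open>w\<close> with \<open>v \<le> u \<backslash>\<^sup>\<pi> w\<close>.\<close>
definition cprod :: "('a,'b) ra_scheme \<Rightarrow> 'a set set \<Rightarrow> 'a set set \<Rightarrow> 'a set set" where
  "cprod A u v = prime_filters A \<inter> \<Inter>{w \<in> cext A. v \<subseteq> ldiv_pi A u w}"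

text \<open>Completely join-irreducible elements of \<open>A\<^sup>\<delta>\<close> (joins are unions, bottom is the empty set).\<close>
definition Jinf :: "('a,'b) ra_scheme \<Rightarrow> 'a set set set" where
  "Jinf A = {j \<in> cext A. j \<noteq> {} \<and> (\<forall>S. S \<subseteq> cext A \<longrightarrow> j = \<Union>S \<longrightarrow> j \<in> S)}"

definition dual_functional :: "('a,'b) ra_scheme \<Rightarrow> bool" where
  "dual_functional A \<longleftrightarrow> (\<forall>y\<in>Jinf A. \<forall>z\<in>Jinf A. cprod A y z \<in> Jinf A \<union> {{}})"

definition dual_total :: "('a,'b) ra_scheme \<Rightarrow> bool" where
  "dual_total A \<longleftrightarrow> (\<forall>y\<in>Jinf A. \<forall>z\<in>Jinf A. cprod A y z \<in> Jinf A)"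

definition Z3 :: "int set" where "Z3 = {0, 1, 2}"

definition cplx_mult :: "int set \<Rightarrow> int set \<Rightarrow> int set" where
  "cplx_mult X Y = {(x + y) mod 3 | x y. x \<in> X \<and> y \<in> Y}"

definition Z3cx :: "int set rl" where
  "Z3cx = \<lparr> carrier = Pow Z3, r_meet = (\<inter>), r_join = (\<union>), r_bot = {}, r_top = Z3,
     r_ldiv = (\<lambda>X Y. {c \<in> Z3. cplx_mult X {c} \<subseteq> Y}),
     r_rdiv = (\<lambda>X Y. {c \<in> Z3. cplx_mult {c} Y \<subseteq> X}),
     r_mult = cplx_mult, r_one = {0} \<rparr>"

definition Z3sub :: "int set rl" where
  "Z3sub = Z3cx \<lparr> carrier := {{}, {0}, {1, 2}, Z3} \<rparr>"

end

theory Submission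
  imports Defs
begin

(*
  Universal sentences are preserved under substructures, so any property defined by one among
  residuation algebras (or residuated lattices) passes from an algebra to its subalgebras.
  Both algebras below are finite fields of sets, so their canonical extensions are themselves,
  the completely join-irreducibles are the atoms, and the product of A\<^sup>\<delta> is the complex
  product. In P(Z3) the atoms are the singletons and {x}{y} = {x + y}, so the dual is total.
  The negation-invariant subalgebra {{}, {0}, {1,2}, Z3} has the atom {1,2}, but
  {1,2}{1,2} = Z3 is neither an atom nor empty; so it is not functional although P(Z3) is.
*)

section \<open>Universal sentences and substructures\<close>

(* Only the operations matter: no closure of the smaller carrier is required, since terms are
   evaluated by the operations themselves. *)
definition ra_substructure :: "('a, 'b) ra_scheme \<Rightarrow> ('a, 'c) ra_scheme \<Rightarrow> bool" where
  "ra_substructure B A \<longleftrightarrow> carrier B \<subseteq> carrier A \<and>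
     r_bot B = r_bot A \<and> r_top B = r_top A \<and> r_meet B = r_meet A \<and> r_join B = r_join A \<and>
     r_ldiv B = r_ldiv A \<and> r_rdiv B = r_rdiv A"

definition rl_substructure :: "'a rl \<Rightarrow> 'a rl \<Rightarrow> bool" where
  "rl_substructure B A \<longleftrightarrow> ra_substructure B A \<and> r_mult B = r_mult A \<and> r_one B = r_one A"

lemma eval_r_substructure: "ra_substructure B A \<Longrightarrow> eval_r B \<rho> t = eval_r A \<rho> t"
  by (induction t) (simp_all add: ra_substructure_def)

lemma eval_l_substructure: "rl_substructure B A \<Longrightarrow> eval_l B \<rho> t = eval_l A \<rho> t"
  by (induction t) (simp_all add: rl_substructure_def ra_substructure_def)

lemma models_univ_r_substructure:
  "ra_substructure B A \<Longrightarrow> models_univ_r A \<phi> \<Longrightarrow> models_univ_r B \<phi>"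
  unfolding models_univ_r_def
  by (metis (no_types, lifting) eval_r_substructure ext ra_substructure_def subsetD)

lemma models_univ_l_substructure:
  "rl_substructure B A \<Longrightarrow> models_univ_l A \<phi> \<Longrightarrow> models_univ_l B \<phi>"
  unfolding models_univ_l_def
  by (metis (no_types, lifting) eval_l_substructure ext rl_substructure_def ra_substructure_def subsetD)

lemma not_universally_definable_r:
  assumes "K A" "K B" "ra_substructure B A" "P A" "\<not> P B"
  shows "\<not> (\<exists>\<phi>. \<forall>A. K A \<longrightarrow> (models_univ_r A \<phi> \<longleftrightarrow> P A))"
  using assms models_univ_r_substructure by blast

lemma not_universally_definable_l:
  assumes "K A" "K B" "rl_substructure B A" "P A" "\<not> P B"
  shows "\<not> (\<exists>\<phi>. \<forall>A. K A \<longrightarrow> (models_univ_l A \<phi> \<longleftrightarrow> P A))"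
  using assms models_univ_l_substructure by blast

lemma ra_substructure_truncate:
  "ra_substructure (ra.truncate B) (ra.truncate A) \<longleftrightarrow> ra_substructure B A"
  by (simp add: ra_substructure_def ra.defs)

lemma residuation_algebra_truncate:
  "residuation_algebra (ra.truncate A) \<longleftrightarrow> residuation_algebra A"
  unfolding residuation_algebra_def bounded_distrib_lattice_def r_le_def by (simp add: ra.defs)

section \<open>The dual of an algebra identified with its canonical extension\<close>

lemma dual_functional_truncate: "dual_functional (ra.truncate A) \<longleftrightarrow> dual_functional A"
  unfolding dual_functional_def Jinf_def cprod_def ldiv_pi_def ldiv_pi_KO_def closed_elts_def
    open_elts_def emb_def cext_def prime_filters_def r_le_def
  by (simp add: ra.defs)

lemma dual_total_imp_functional: "dual_total A \<Longrightarrow> dual_functional A"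
  unfolding dual_total_def dual_functional_def by blast

lemma emb_in_cext: "emb A a \<in> cext A"
  unfolding emb_def cext_def by blast

lemma closed_elts_subset_cext: "closed_elts A \<subseteq> cext A"
  unfolding closed_elts_def cext_def emb_def by blast

lemma open_elts_subset_cext: "open_elts A \<subseteq> cext A"
  unfolding open_elts_def cext_def emb_def by blast

lemma emb_mono: "b \<in> carrier A \<Longrightarrow> r_le A a b \<Longrightarrow> emb A a \<subseteq> emb A b"
  unfolding emb_def prime_filters_def by blast

lemma cext_eq_Pow:
  assumes "\<And>F G. F \<in> prime_filters A \<Longrightarrow> G \<in> prime_filters A \<Longrightarrow> F \<subseteq> G \<Longrightarrow> F = G"
  shows "cext A = Pow (prime_filters A)"
  using assms unfolding cext_def by blast

lemma Jinf_eq_singletons: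
  assumes cext: "cext A = Pow (prime_filters A)"
  shows "Jinf A = (\<lambda>F. {F}) ` prime_filters A"
proof (intro equalityI subsetI)
  fix j assume j: "j \<in> Jinf A"
  have "(\<lambda>F. {F}) ` j \<subseteq> cext A" "j = \<Union>((\<lambda>F. {F}) ` j)"
    using j cext unfolding Jinf_def by auto
  then have "j \<in> (\<lambda>F. {F}) ` j"
    using j unfolding Jinf_def by blast
  then show "j \<in> (\<lambda>F. {F}) ` prime_filters A"
    using j cext unfolding Jinf_def by auto
next
  fix j assume "j \<in> (\<lambda>F. {F}) ` prime_filters A"
  then obtain F where F: "F \<in> prime_filters A" "j = {F}" by blast
  have "j \<in> S" if "S \<subseteq> cext A" "j = \<Union>S" for S
  proof -
    obtain s where "s \<in> S" "F \<in> s" using \<open>j = \<Union>S\<close> F(2) by blast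
    moreover have "s \<subseteq> {F}" using \<open>s \<in> S\<close> \<open>j = \<Union>S\<close> F(2) by blast
    ultimately have "s = j" using F(2) by auto
    with \<open>s \<in> S\<close> show "j \<in> S" by simp
  qed
  then show "j \<in> Jinf A"
    using F cext unfolding Jinf_def by auto
qed

(* \<open>emb\<close> maps A isomorphically onto A\<^sup>\<delta>: the form that A\<^sup>\<delta> = A takes for finite A. *)
definition emb_iso :: "('a, 'b) ra_scheme \<Rightarrow> bool" where
  "emb_iso A \<longleftrightarrow> (\<forall>u\<in>cext A. \<exists>a\<in>carrier A. u = emb A a) \<and>
     (\<forall>a\<in>carrier A. \<forall>b\<in>carrier A. emb A a \<subseteq> emb A b \<longrightarrow> r_le A a b)"

lemma emb_iso_onto: "emb_iso A \<Longrightarrow> u \<in> cext A \<Longrightarrow> \<exists>a\<in>carrier A. u = emb A a"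
  unfolding emb_iso_def by blast

lemma emb_iso_subset_iff:
  "emb_iso A \<Longrightarrow> a \<in> carrier A \<Longrightarrow> b \<in> carrier A \<Longrightarrow> emb A a \<subseteq> emb A b \<longleftrightarrow> r_le A a b"
  unfolding emb_iso_def using emb_mono[of b A a] by blast

lemma ldiv_pi_emb:
  assumes iso: "emb_iso A"
    and ldiv_closed: "\<And>a b. a \<in> carrier A \<Longrightarrow> b \<in> carrier A \<Longrightarrow> r_ldiv A a b \<in> carrier A"
    and ldiv_mono: "\<And>a a' b b'. \<lbrakk>a \<in> carrier A; a' \<in> carrier A; b \<in> carrier A; b' \<in> carrier A;
        r_le A a' a; r_le A b b'\<rbrakk> \<Longrightarrow> r_le A (r_ldiv A a b) (r_ldiv A a' b')"
    and a: "a \<in> carrier A" and c: "c \<in> carrier A"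
  shows "ldiv_pi A (emb A a) (emb A c) = emb A (r_ldiv A a c)"
proof
  show "emb A (r_ldiv A a c) \<subseteq> ldiv_pi A (emb A a) (emb A c)"
    unfolding ldiv_pi_def
  proof (intro Int_greatest Inter_greatest)
    show "emb A (r_ldiv A a c) \<subseteq> prime_filters A" unfolding emb_def by blast
  next
    fix w assume "w \<in> {ldiv_pi_KO A k o' |k o'. k \<in> closed_elts A \<and> o' \<in> open_elts A \<and>
        k \<subseteq> emb A a \<and> emb A c \<subseteq> o'}"
    then obtain k o' where w: "w = ldiv_pi_KO A k o'" and "k \<in> closed_elts A" "o' \<in> open_elts A"
      and "k \<subseteq> emb A a" "emb A c \<subseteq> o'" by blast
    obtain a' where a': "a' \<in> carrier A" "k = emb A a'"
      using emb_iso_onto[OF iso] closed_elts_subset_cext \<open>k \<in> closed_elts A\<close> by blast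
    obtain c' where c': "c' \<in> carrier A" "o' = emb A c'"
      using emb_iso_onto[OF iso] open_elts_subset_cext \<open>o' \<in> open_elts A\<close> by blast
    have "r_le A a' a" "r_le A c c'"
      using emb_iso_subset_iff[OF iso] a c a' c' \<open>k \<subseteq> emb A a\<close> \<open>emb A c \<subseteq> o'\<close> by simp_all
    then have "r_le A (r_ldiv A a c) (r_ldiv A a' c')"
      by (rule ldiv_mono[OF a a'(1) c c'(1)])
    then have "emb A (r_ldiv A a c) \<subseteq> emb A (r_ldiv A a' c')"
      using emb_iso_subset_iff[OF iso ldiv_closed[OF a c] ldiv_closed[OF a'(1) c'(1)]] by simp
    also have "\<dots> \<subseteq> w"
      unfolding w ldiv_pi_KO_def using a' c' by (intro Union_upper) blast
    finally show "emb A (r_ldiv A a c) \<subseteq> w" .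
  qed
next
  have "emb A a \<in> closed_elts A"
    unfolding closed_elts_def using a by (intro CollectI exI[of _ "{a}"]) (auto simp: emb_def)
  moreover have "emb A c \<in> open_elts A"
    unfolding open_elts_def using c by (intro CollectI exI[of _ "{c}"]) auto
  ultimately have "ldiv_pi A (emb A a) (emb A c) \<subseteq> ldiv_pi_KO A (emb A a) (emb A c)"
    unfolding ldiv_pi_def by blast
  also have "\<dots> \<subseteq> emb A (r_ldiv A a c)"
  proof
    fix F assume "F \<in> ldiv_pi_KO A (emb A a) (emb A c)"
    then obtain a' c' where a': "a' \<in> carrier A" "emb A a \<subseteq> emb A a'"
      and c': "c' \<in> carrier A" "emb A c' \<subseteq> emb A c" and F: "F \<in> emb A (r_ldiv A a' c')"
      unfolding ldiv_pi_KO_def by blast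
    have "r_le A a a'" "r_le A c' c"
      using emb_iso_subset_iff[OF iso] a c a' c' by simp_all
    then have "r_le A (r_ldiv A a' c') (r_ldiv A a c)"
      by (rule ldiv_mono[OF a'(1) a c'(1) c])
    then have "emb A (r_ldiv A a' c') \<subseteq> emb A (r_ldiv A a c)"
      using emb_iso_subset_iff[OF iso ldiv_closed[OF a'(1) c'(1)] ldiv_closed[OF a c]] by simp
    then show "F \<in> emb A (r_ldiv A a c)" using F by blast
  qed
  finally show "ldiv_pi A (emb A a) (emb A c) \<subseteq> emb A (r_ldiv A a c)" .
qed

lemma cprod_emb:
  assumes iso: "emb_iso A"
    and ldiv_closed: "\<And>a b. a \<in> carrier A \<Longrightarrow> b \<in> carrier A \<Longrightarrow> r_ldiv A a b \<in> carrier A"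
    and ldiv_mono: "\<And>a a' b b'. \<lbrakk>a \<in> carrier A; a' \<in> carrier A; b \<in> carrier A; b' \<in> carrier A;
        r_le A a' a; r_le A b b'\<rbrakk> \<Longrightarrow> r_le A (r_ldiv A a b) (r_ldiv A a' b')"
    and a: "a \<in> carrier A" and b: "b \<in> carrier A" and m: "m \<in> carrier A"
    and adjoint: "\<And>c. c \<in> carrier A \<Longrightarrow> r_le A m c \<longleftrightarrow> r_le A b (r_ldiv A a c)"
  shows "cprod A (emb A a) (emb A b) = emb A m"
proof -
  have key: "emb A b \<subseteq> ldiv_pi A (emb A a) w \<longleftrightarrow> emb A m \<subseteq> w" if w: "w \<in> cext A" for w
  proof -
    obtain c where c: "c \<in> carrier A" "w = emb A c" using emb_iso_onto[OF iso w] by blast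
    have "emb A b \<subseteq> ldiv_pi A (emb A a) w \<longleftrightarrow> emb A b \<subseteq> emb A (r_ldiv A a c)"
      using ldiv_pi_emb[OF iso ldiv_closed ldiv_mono a c(1)] c(2) by simp
    also have "\<dots> \<longleftrightarrow> r_le A m c"
      using emb_iso_subset_iff[OF iso b ldiv_closed[OF a c(1)]] adjoint[OF c(1)] by simp
    also have "\<dots> \<longleftrightarrow> emb A m \<subseteq> w"
      using emb_iso_subset_iff[OF iso m c(1)] c(2) by simp
    finally show ?thesis .
  qed
  have "{w \<in> cext A. emb A b \<subseteq> ldiv_pi A (emb A a) w} = {w \<in> cext A. emb A m \<subseteq> w}"
    using key by blast
  moreover have "\<Inter>{w \<in> cext A. emb A m \<subseteq> w} = emb A m"
    using emb_in_cext[of A m] by (intro equalityI Inter_lower Inter_greatest) auto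
  ultimately show ?thesis
    unfolding cprod_def by (simp add: Int_absorb1 emb_def)
qed

section \<open>Finite fields of sets\<close>

definition set_lattice :: "'u set \<Rightarrow> ('u set, 'b) ra_scheme \<Rightarrow> bool" where
  "set_lattice U A \<longleftrightarrow> carrier A \<subseteq> Pow U \<and> {} \<in> carrier A \<and> U \<in> carrier A \<and>
     (\<forall>X\<in>carrier A. \<forall>Y\<in>carrier A. X \<inter> Y \<in> carrier A \<and> X \<union> Y \<in> carrier A) \<and>
     r_meet A = (\<inter>) \<and> r_join A = (\<union>) \<and> r_bot A = {} \<and> r_top A = U"

definition finite_field_of_sets :: "'u set \<Rightarrow> ('u set, 'b) ra_scheme \<Rightarrow> bool" where
  "finite_field_of_sets U A \<longleftrightarrow> set_lattice U A \<and> finite (carrier A) \<and>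
     (\<forall>X\<in>carrier A. U - X \<in> carrier A)"

definition point_filter :: "('u set, 'b) ra_scheme \<Rightarrow> 'u \<Rightarrow> 'u set set" where
  "point_filter A x = {X \<in> carrier A. x \<in> X}"

lemma r_le_set_lattice: "set_lattice U A \<Longrightarrow> r_le A X Y \<longleftrightarrow> X \<subseteq> Y"
  unfolding set_lattice_def r_le_def by auto

lemma bounded_distrib_lattice_set_lattice: "set_lattice U A \<Longrightarrow> bounded_distrib_lattice A"
  unfolding set_lattice_def bounded_distrib_lattice_def Let_def by (auto simp: Int_Un_distrib)

lemma Union_in_set_lattice:
  assumes "set_lattice U A"
    and "finite S" "S \<subseteq> carrier A"
  shows "\<Union>S \<in> carrier A"
  using assms(2-) by (induction S rule: finite_induct) (use assms(1) in \<open>auto simp: set_lattice_def\<close>)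

lemma Inter_in_set_lattice:
  assumes "set_lattice U A"
    and "finite S" "S \<noteq> {}" "S \<subseteq> carrier A"
  shows "\<Inter>S \<in> carrier A"
  using assms(2-) by (induction S rule: finite_ne_induct) (use assms(1) in \<open>auto simp: set_lattice_def\<close>)

lemma point_filter_prime:
  assumes L: "set_lattice U A" and "x \<in> U"
  shows "point_filter A x \<in> prime_filters A"
  using assms unfolding prime_filters_def point_filter_def r_le_set_lattice[OF L] set_lattice_def
  by auto

lemma prime_filter_Union:
  assumes L: "set_lattice U A" and F: "F \<in> prime_filters A"
  shows "finite S \<Longrightarrow> S \<subseteq> carrier A \<Longrightarrow> \<Union>S \<in> F \<Longrightarrow> \<exists>X\<in>S. X \<in> F"
proof (induction S rule: finite_induct)
  case empty
  then show ?case using L F by (simp add: set_lattice_def prime_filters_def)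
next
  case (insert X S)
  have "r_join A X (\<Union>S) \<in> F" using insert.prems L by (simp add: set_lattice_def)
  moreover have "\<Union>S \<in> carrier A" using Union_in_set_lattice[OF L] insert by simp
  ultimately have "X \<in> F \<or> \<Union>S \<in> F" using insert.prems F unfolding prime_filters_def by blast
  then show ?case using insert.IH insert.prems by blast
qed

lemma prime_filter_Inter:
  assumes L: "set_lattice U A" and F: "F \<in> prime_filters A"
  shows "finite S \<Longrightarrow> S \<noteq> {} \<Longrightarrow> S \<subseteq> F \<Longrightarrow> \<Inter>S \<in> F"
proof (induction S rule: finite_ne_induct)
  case (insert X S)
  then have "r_meet A X (\<Inter>S) \<in> F" using F unfolding prime_filters_def by blast
  then show ?case using L by (simp add: set_lattice_def)
qed simp

lemma prime_filter_is_point_filter: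
  assumes L: "set_lattice U A" and fin: "finite (carrier A)" and F: "F \<in> prime_filters A"
  obtains x where "x \<in> U" "F = point_filter A x"
proof -
  have F_carrier: "F \<subseteq> carrier A" and "U \<in> F"
    and up: "\<And>X Y. X \<in> F \<Longrightarrow> Y \<in> carrier A \<Longrightarrow> X \<subseteq> Y \<Longrightarrow> Y \<in> F"
    using F L unfolding prime_filters_def r_le_set_lattice[OF L] set_lattice_def by auto
  \<comment> \<open>\<open>m\<close> is the least element of F; if no point of \<open>m\<close> determined F, the parts of \<open>m\<close>
     cut off by members of the carrier not above \<open>m\<close> would cover \<open>m\<close>, against primeness\<close>
  define m where "m = \<Inter>F"
  have "finite F" using finite_subset[OF F_carrier fin] .
  then have "m \<in> F"
    unfolding m_def using prime_filter_Inter[OF L F] \<open>U \<in> F\<close> by blast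
  define S where "S = {m \<inter> X | X. X \<in> carrier A \<and> \<not> m \<subseteq> X}"
  have S_carrier: "S \<subseteq> carrier A"
    using \<open>m \<in> F\<close> F_carrier L unfolding S_def set_lattice_def by blast
  have "\<Union>S \<notin> F"
  proof
    assume "\<Union>S \<in> F"
    then obtain Y where "Y \<in> S" "Y \<in> F"
      using prime_filter_Union[OF L F finite_subset[OF S_carrier fin] S_carrier] by blast
    then obtain X where "\<not> m \<subseteq> X" "m \<inter> X \<in> F" unfolding S_def by blast
    then show False unfolding m_def by blast
  qed
  moreover have "\<Union>S \<subseteq> m" unfolding S_def by blast
  ultimately obtain x where "x \<in> m" "x \<notin> \<Union>S"
    using \<open>m \<in> F\<close> by (metis subsetI subset_antisym)
  have "F = point_filter A x"
  proof (intro equalityI subsetI)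
    fix X assume "X \<in> F"
    then show "X \<in> point_filter A x"
      using \<open>x \<in> m\<close> F_carrier unfolding m_def point_filter_def by blast
  next
    fix X assume X: "X \<in> point_filter A x"
    then have "X \<in> carrier A" unfolding point_filter_def by blast
    moreover have "m \<subseteq> X"
      using X \<open>x \<notin> \<Union>S\<close> \<open>x \<in> m\<close> unfolding point_filter_def S_def by blast
    ultimately show "X \<in> F" using up \<open>m \<in> F\<close> by blast
  qed
  moreover have "x \<in> U" using \<open>x \<in> m\<close> \<open>U \<in> F\<close> unfolding m_def by blast
  ultimately show thesis using that by blast
qed

lemma prime_filters_set_lattice:
  "set_lattice U A \<Longrightarrow> finite (carrier A) \<Longrightarrow> prime_filters A = point_filter A ` U"
  by (metis (no_types, lifting) image_subset_iff point_filter_prime prime_filter_is_point_filter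
      subsetI subset_antisym)

lemma emb_set_lattice:
  assumes L: "set_lattice U A" and fin: "finite (carrier A)" and X: "X \<in> carrier A"
  shows "emb A X = point_filter A ` X"
proof -
  have "X \<subseteq> U" using L X unfolding set_lattice_def by blast
  then show ?thesis
    using X unfolding emb_def prime_filters_set_lattice[OF L fin] point_filter_def by blast
qed

lemma emb_reflects_subset:
  assumes L: "set_lattice U A" and X: "X \<in> carrier A" and sub: "emb A X \<subseteq> emb A Y"
  shows "X \<subseteq> Y"
proof
  fix x assume "x \<in> X"
  moreover have "x \<in> U" using L X \<open>x \<in> X\<close> unfolding set_lattice_def by blast
  ultimately have "point_filter A x \<in> emb A X"
    using point_filter_prime[OF L] X unfolding emb_def point_filter_def by blast
  then show "x \<in> Y" using sub unfolding emb_def point_filter_def by blast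
qed

lemma point_filter_antichain:
  assumes A: "finite_field_of_sets U A" and "x \<in> U"
    and sub: "point_filter A x \<subseteq> point_filter A y"
  shows "point_filter A x = point_filter A y"
proof (intro equalityI sub subsetI)
  fix X assume X: "X \<in> point_filter A y"
  show "X \<in> point_filter A x"
  proof (rule ccontr)
    assume "X \<notin> point_filter A x"
    then have "U - X \<in> point_filter A x"
      using A X \<open>x \<in> U\<close> unfolding finite_field_of_sets_def point_filter_def by blast
    then show False using sub X unfolding point_filter_def by blast
  qed
qed

lemma cext_field_of_sets:
  assumes "finite_field_of_sets U A"
  shows "cext A = Pow (prime_filters A)"
proof (rule cext_eq_Pow)
  have "set_lattice U A" "finite (carrier A)"
    using assms unfolding finite_field_of_sets_def by blast+
  then have P: "prime_filters A = point_filter A ` U"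
    by (rule prime_filters_set_lattice)
  show "F = G" if F: "F \<in> prime_filters A" and G: "G \<in> prime_filters A" and "F \<subseteq> G" for F G
  proof -
    obtain x y where "x \<in> U" "F = point_filter A x" "G = point_filter A y"
      using F G unfolding P by blast
    then show ?thesis using point_filter_antichain[OF assms] \<open>F \<subseteq> G\<close> by blast
  qed
qed

lemma Jinf_field_of_sets:
  assumes "finite_field_of_sets U A"
  shows "Jinf A = (\<lambda>x. {point_filter A x}) ` U"
proof -
  have "set_lattice U A" "finite (carrier A)"
    using assms unfolding finite_field_of_sets_def by blast+
  then show ?thesis
    by (simp add: Jinf_eq_singletons[OF cext_field_of_sets[OF assms]] prime_filters_set_lattice
        image_image)
qed

lemma emb_onto_field_of_sets:
  assumes A: "finite_field_of_sets U A" and V: "V \<subseteq> prime_filters A"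
  obtains X where "X \<in> carrier A" "V = emb A X"
proof -
  have L: "set_lattice U A" and fin: "finite (carrier A)"
    using A unfolding finite_field_of_sets_def by blast+
  define X where "X = {x \<in> U. point_filter A x \<in> V}"
  define atom where "atom x = \<Inter>(point_filter A x)" for x
  have atom_carrier: "atom x \<in> carrier A" if "x \<in> U" for x
  proof -
    have "point_filter A x \<subseteq> carrier A" "U \<in> point_filter A x"
      using L that unfolding point_filter_def set_lattice_def by blast+
    moreover have "finite (point_filter A x)"
      using finite_subset[OF _ fin] calculation(1) .
    ultimately show ?thesis
      unfolding atom_def using Inter_in_set_lattice[OF L] by blast
  qed
  have "X = \<Union>(atom ` X)"
  proof (intro equalityI subsetI)
    fix x assume "x \<in> X"
    then show "x \<in> \<Union>(atom ` X)" unfolding atom_def point_filter_def by blast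
  next
    fix y assume "y \<in> \<Union>(atom ` X)"
    then obtain x where x: "x \<in> X" "y \<in> atom x" by blast
    have "U \<in> point_filter A x"
      using L x(1) unfolding X_def point_filter_def set_lattice_def by blast
    then have "y \<in> U" using x(2) unfolding atom_def by blast
    have "point_filter A x \<subseteq> point_filter A y"
      using x(2) unfolding atom_def point_filter_def by blast
    then have "point_filter A y = point_filter A x"
      using point_filter_antichain[OF A] x(1) unfolding X_def by (metis (no_types, lifting) mem_Collect_eq)
    then show "y \<in> X" using \<open>y \<in> U\<close> x(1) unfolding X_def by simp
  qed
  moreover have "atom ` X \<subseteq> carrier A" using atom_carrier unfolding X_def by blast
  moreover have "finite (atom ` X)" using finite_subset[OF calculation(2) fin] .
  ultimately have "X \<in> carrier A"
    using Union_in_set_lattice[OF L] by metis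
  moreover have "emb A X = V"
  proof -
    have "emb A X = point_filter A ` X" by (rule emb_set_lattice[OF L fin \<open>X \<in> carrier A\<close>])
    also have "\<dots> = V" using V unfolding prime_filters_set_lattice[OF L fin] X_def by blast
    finally show ?thesis .
  qed
  ultimately show thesis using that by blast
qed

lemma emb_iso_field_of_sets: "finite_field_of_sets U A \<Longrightarrow> emb_iso A"
  unfolding emb_iso_def cext_field_of_sets
  by (metis PowD emb_onto_field_of_sets emb_reflects_subset finite_field_of_sets_def r_le_set_lattice)

section \<open>The complex algebra of Z3 and its subalgebras\<close>

lemma mod3_in_Z3: "k mod 3 \<in> Z3"
  unfolding Z3_def by (simp add: Z3_def) (smt (verit) pos_mod_bound pos_mod_sign)

lemma cplx_mult_subset_Z3: "cplx_mult X Y \<subseteq> Z3"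
  unfolding cplx_mult_def using mod3_in_Z3 by blast

lemma mem_cplx_mult: "z \<in> cplx_mult X Y \<longleftrightarrow> (\<exists>x\<in>X. \<exists>y\<in>Y. z = (x + y) mod 3)"
  unfolding cplx_mult_def by blast

lemma cplx_mult_subset_iff: "cplx_mult X Y \<subseteq> Z \<longleftrightarrow> (\<forall>x\<in>X. \<forall>y\<in>Y. (x + y) mod 3 \<in> Z)"
  unfolding cplx_mult_def by blast

lemma cplx_mult_singletons: "cplx_mult {x} {y} = {(x + y) mod 3}"
  unfolding cplx_mult_def by simp

lemma cplx_mult_assoc: "cplx_mult X (cplx_mult Y Z) = cplx_mult (cplx_mult X Y) Z"
proof -
  have "cplx_mult X (cplx_mult Y Z) = {(x + y + z) mod 3 | x y z. x \<in> X \<and> y \<in> Y \<and> z \<in> Z}"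
    unfolding cplx_mult_def by (auto simp: mod_add_right_eq add.assoc) (blast, metis mod_add_right_eq)
  also have "\<dots> = cplx_mult (cplx_mult X Y) Z"
    unfolding cplx_mult_def by (auto simp: mod_add_left_eq) (blast | metis mod_add_left_eq)+
  finally show ?thesis .
qed

lemma cplx_mult_unit:
  assumes "X \<subseteq> Z3"
  shows "cplx_mult {0} X = X" "cplx_mult X {0} = X"
proof -
  have "x mod 3 = x" if "x \<in> X" for x
    using assms that unfolding Z3_def by auto
  then show "cplx_mult {0} X = X" "cplx_mult X {0} = X"
    unfolding cplx_mult_def by force+
qed

lemma ldiv_Z3cx_iff: "c \<in> r_ldiv Z3cx X Y \<longleftrightarrow> c \<in> Z3 \<and> (\<forall>x\<in>X. (x + c) mod 3 \<in> Y)"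
  unfolding Z3cx_def by (simp add: cplx_mult_subset_iff)

lemma rdiv_Z3cx_iff: "c \<in> r_rdiv Z3cx X Y \<longleftrightarrow> c \<in> Z3 \<and> (\<forall>y\<in>Y. (c + y) mod 3 \<in> X)"
  unfolding Z3cx_def by (simp add: cplx_mult_subset_iff)

lemma cplx_mult_residuated:
  "Y \<subseteq> Z3 \<Longrightarrow> cplx_mult X Y \<subseteq> Z \<longleftrightarrow> Y \<subseteq> r_ldiv Z3cx X Z"
  "X \<subseteq> Z3 \<Longrightarrow> cplx_mult X Y \<subseteq> Z \<longleftrightarrow> X \<subseteq> r_rdiv Z3cx Z Y"
  by (auto simp: cplx_mult_subset_iff ldiv_Z3cx_iff rdiv_Z3cx_iff)

lemma ldiv_rdiv_Z3cx_galois: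
  "X \<subseteq> Z3 \<Longrightarrow> Y \<subseteq> Z3 \<Longrightarrow> Y \<subseteq> r_ldiv Z3cx X Z \<longleftrightarrow> X \<subseteq> r_rdiv Z3cx Z Y"
  using cplx_mult_residuated(1)[of Y X Z] cplx_mult_residuated(2)[of X Y Z] by simp

lemma ldiv_Z3cx_mono:
  assumes "a' \<subseteq> a" "b \<subseteq> b'"
  shows "r_ldiv Z3cx a b \<subseteq> r_ldiv Z3cx a' b'"
proof
  fix c assume "c \<in> r_ldiv Z3cx a b"
  then show "c \<in> r_ldiv Z3cx a' b'" using assms unfolding ldiv_Z3cx_iff by blast
qed

abbreviation Z3cx_on :: "int set set \<Rightarrow> int set rl" where
  "Z3cx_on C \<equiv> Z3cx\<lparr>carrier := C\<rparr>"

lemma Z3cx_on_simps: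
  "carrier (Z3cx_on C) = C" "r_meet (Z3cx_on C) = (\<inter>)" "r_join (Z3cx_on C) = (\<union>)"
  "r_bot (Z3cx_on C) = {}" "r_top (Z3cx_on C) = Z3"
  "r_ldiv (Z3cx_on C) = r_ldiv Z3cx" "r_rdiv (Z3cx_on C) = r_rdiv Z3cx"
  "r_mult (Z3cx_on C) = cplx_mult" "r_one (Z3cx_on C) = {0}"
  by (simp_all add: Z3cx_def)

definition Z3_subuniverse :: "int set set \<Rightarrow> bool" where
  "Z3_subuniverse C \<longleftrightarrow> C \<subseteq> Pow Z3 \<and> {} \<in> C \<and> Z3 \<in> C \<and> {0} \<in> C \<and>
     (\<forall>X\<in>C. \<forall>Y\<in>C. X \<inter> Y \<in> C \<and> X \<union> Y \<in> C \<and> cplx_mult X Y \<in> C \<and>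
        r_ldiv Z3cx X Y \<in> C \<and> r_rdiv Z3cx X Y \<in> C)"

lemma set_lattice_Z3cx_on: "Z3_subuniverse C \<Longrightarrow> set_lattice Z3 (Z3cx_on C)"
  unfolding set_lattice_def Z3_subuniverse_def Z3cx_on_simps by blast

lemma residuated_lattice_Z3cx_on:
  assumes C: "Z3_subuniverse C"
  shows "residuated_lattice (Z3cx_on C)"
  unfolding residuated_lattice_def r_le_set_lattice[OF set_lattice_Z3cx_on[OF C]] Z3cx_on_simps
proof (intro conjI ballI)
  have sub: "\<And>X. X \<in> C \<Longrightarrow> X \<subseteq> Z3" using C unfolding Z3_subuniverse_def by blast
  show "bounded_distrib_lattice (Z3cx_on C)"
    by (rule bounded_distrib_lattice_set_lattice[OF set_lattice_Z3cx_on[OF C]])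
  fix X Y assume X: "X \<in> C" and Y: "Y \<in> C"
  show "r_ldiv Z3cx X Y \<in> C" "r_rdiv Z3cx X Y \<in> C" "cplx_mult X Y \<in> C"
    using C X Y unfolding Z3_subuniverse_def by blast+
  show "cplx_mult {0} X = X" "cplx_mult X {0} = X" using cplx_mult_unit[OF sub[OF X]] by blast+
  fix Z
  show "cplx_mult X (cplx_mult Y Z) = cplx_mult (cplx_mult X Y) Z" by (rule cplx_mult_assoc)
  show "cplx_mult X Y \<subseteq> Z \<longleftrightarrow> Y \<subseteq> r_ldiv Z3cx X Z" by (rule cplx_mult_residuated(1)[OF sub[OF Y]])
  show "cplx_mult X Y \<subseteq> Z \<longleftrightarrow> X \<subseteq> r_rdiv Z3cx Z Y" by (rule cplx_mult_residuated(2)[OF sub[OF X]])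
next
  show "{0} \<in> C" using C unfolding Z3_subuniverse_def by blast
qed

lemma residuation_algebra_Z3cx_on:
  assumes C: "Z3_subuniverse C"
  shows "residuation_algebra (Z3cx_on C)"
  unfolding residuation_algebra_def r_le_set_lattice[OF set_lattice_Z3cx_on[OF C]] Z3cx_on_simps
proof (intro conjI ballI)
  have sub: "\<And>X. X \<in> C \<Longrightarrow> X \<subseteq> Z3" using C unfolding Z3_subuniverse_def by blast
  show "bounded_distrib_lattice (Z3cx_on C)"
    by (rule bounded_distrib_lattice_set_lattice[OF set_lattice_Z3cx_on[OF C]])
  fix X Y assume X: "X \<in> C" and Y: "Y \<in> C"
  show "r_ldiv Z3cx X Y \<in> C" "r_rdiv Z3cx X Y \<in> C"
    using C X Y unfolding Z3_subuniverse_def by blast+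
  fix Z
  show "r_ldiv Z3cx X (Y \<inter> Z) = r_ldiv Z3cx X Y \<inter> r_ldiv Z3cx X Z"
    "r_rdiv Z3cx (Y \<inter> Z) X = r_rdiv Z3cx Y X \<inter> r_rdiv Z3cx Z X"
    by (auto simp: ldiv_Z3cx_iff rdiv_Z3cx_iff)
  show "Y \<subseteq> r_ldiv Z3cx X Z \<longleftrightarrow> X \<subseteq> r_rdiv Z3cx Z Y"
    by (rule ldiv_rdiv_Z3cx_galois[OF sub[OF X] sub[OF Y]])
next
  fix X
  show "r_ldiv Z3cx X Z3 = Z3" "r_rdiv Z3cx Z3 X = Z3"
    by (auto simp: ldiv_Z3cx_iff rdiv_Z3cx_iff mod3_in_Z3)
qed

lemma finite_field_of_sets_Z3cx_on:
  assumes C: "Z3_subuniverse C" and compl: "\<forall>X\<in>C. Z3 - X \<in> C"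
  shows "finite_field_of_sets Z3 (Z3cx_on C)"
proof -
  have "finite C"
    using C finite_subset[of C "Pow Z3"] unfolding Z3_subuniverse_def Z3_def by auto
  then show ?thesis
    unfolding finite_field_of_sets_def using set_lattice_Z3cx_on[OF C] compl
    by (simp add: Z3cx_on_simps)
qed

lemma cprod_Z3cx_on:
  assumes C: "Z3_subuniverse C" and compl: "\<forall>X\<in>C. Z3 - X \<in> C" and a: "a \<in> C" and b: "b \<in> C"
  shows "cprod (Z3cx_on C) (emb (Z3cx_on C) a) (emb (Z3cx_on C) b) = emb (Z3cx_on C) (cplx_mult a b)"
proof -
  have sub: "\<And>X. X \<in> C \<Longrightarrow> X \<subseteq> Z3"
    and closed: "\<And>X Y. X \<in> C \<Longrightarrow> Y \<in> C \<Longrightarrow> r_ldiv Z3cx X Y \<in> C \<and> cplx_mult X Y \<in> C"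
    using C unfolding Z3_subuniverse_def by blast+
  show ?thesis
  proof (rule cprod_emb[OF emb_iso_field_of_sets[OF finite_field_of_sets_Z3cx_on[OF C compl]]])
    fix a' b' assume "a' \<in> carrier (Z3cx_on C)" "b' \<in> carrier (Z3cx_on C)"
    then show "r_ldiv (Z3cx_on C) a' b' \<in> carrier (Z3cx_on C)"
      using closed by (simp add: Z3cx_on_simps)
  next
    fix a a' b b'
    assume "r_le (Z3cx_on C) a' a" "r_le (Z3cx_on C) b b'"
    then show "r_le (Z3cx_on C) (r_ldiv (Z3cx_on C) a b) (r_ldiv (Z3cx_on C) a' b')"
      unfolding r_le_set_lattice[OF set_lattice_Z3cx_on[OF C]] Z3cx_on_simps
      by (rule ldiv_Z3cx_mono)
  next
    fix c
    show "r_le (Z3cx_on C) (cplx_mult a b) c \<longleftrightarrow> r_le (Z3cx_on C) b (r_ldiv (Z3cx_on C) a c)"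
      unfolding r_le_set_lattice[OF set_lattice_Z3cx_on[OF C]] Z3cx_on_simps
      by (rule cplx_mult_residuated(1)[OF sub[OF b]])
  qed (use a b closed in \<open>simp_all add: Z3cx_on_simps\<close>)
qed

lemma Z3cx_eq: "Z3cx = Z3cx_on (Pow Z3)"
  by (simp add: Z3cx_def)

lemma Z3sub_eq: "Z3sub = Z3cx_on (carrier Z3sub)"
  by (simp add: Z3sub_def Z3cx_def)

lemma Z3_subuniverse_Pow: "Z3_subuniverse (Pow Z3)"
  unfolding Z3_subuniverse_def using cplx_mult_subset_Z3
  by (auto simp: ldiv_Z3cx_iff rdiv_Z3cx_iff Z3_def)

lemma ball_Z3: "X \<subseteq> Z3 \<Longrightarrow> (\<forall>x\<in>X. P x) \<longleftrightarrow> (0 \<in> X \<longrightarrow> P 0) \<and> (1 \<in> X \<longrightarrow> P 1) \<and> (2 \<in> X \<longrightarrow> P 2)"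
  unfolding Z3_def by auto

lemma bex_Z3: "X \<subseteq> Z3 \<Longrightarrow> (\<exists>x\<in>X. P x) \<longleftrightarrow> (0 \<in> X \<and> P 0) \<or> (1 \<in> X \<and> P 1) \<or> (2 \<in> X \<and> P 2)"
  unfolding Z3_def by auto

(* These are the sets fixed by the automorphism x \<mapsto> -x of Z3, hence they form a subalgebra. *)
lemma carrier_Z3sub_iff: "X \<in> carrier Z3sub \<longleftrightarrow> X \<subseteq> Z3 \<and> (1 \<in> X \<longleftrightarrow> 2 \<in> X)"
proof
  assume X: "X \<subseteq> Z3 \<and> (1 \<in> X \<longleftrightarrow> 2 \<in> X)"
  have "X = (if 0 \<in> X then {0} else {}) \<union> (if 1 \<in> X then {1, 2} else {})"
    using X unfolding Z3_def by auto
  then show "X \<in> carrier Z3sub"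
    unfolding Z3sub_def Z3_def by (simp split: if_splits) (simp add: insert_commute)
qed (auto simp: Z3sub_def Z3_def)

lemma Z3_subuniverse_Z3sub: "Z3_subuniverse (carrier Z3sub)"
  unfolding Z3_subuniverse_def
proof (intro conjI ballI)
  show "carrier Z3sub \<subseteq> Pow Z3" using carrier_Z3sub_iff by blast
  show "{} \<in> carrier Z3sub" "Z3 \<in> carrier Z3sub" "{0} \<in> carrier Z3sub"
    unfolding carrier_Z3sub_iff Z3_def by auto
  fix X Y assume "X \<in> carrier Z3sub" "Y \<in> carrier Z3sub"
  then have X: "X \<subseteq> Z3" "1 \<in> X \<longleftrightarrow> 2 \<in> X" and Y: "Y \<subseteq> Z3" "1 \<in> Y \<longleftrightarrow> 2 \<in> Y"
    unfolding carrier_Z3sub_iff by blast+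
  show "X \<inter> Y \<in> carrier Z3sub" "X \<union> Y \<in> carrier Z3sub"
    unfolding carrier_Z3sub_iff using X Y by auto
  have "1 \<in> cplx_mult X Y \<longleftrightarrow> 2 \<in> cplx_mult X Y"
    unfolding mem_cplx_mult bex_Z3[OF X(1)] bex_Z3[OF Y(1)] using X(2) Y(2) by auto
  then show "cplx_mult X Y \<in> carrier Z3sub"
    unfolding carrier_Z3sub_iff using cplx_mult_subset_Z3 by blast
  have "1 \<in> r_ldiv Z3cx X Y \<longleftrightarrow> 2 \<in> r_ldiv Z3cx X Y"
    unfolding ldiv_Z3cx_iff ball_Z3[OF X(1)] using X(2) Y(2) by (auto simp: Z3_def)
  then show "r_ldiv Z3cx X Y \<in> carrier Z3sub"
    unfolding carrier_Z3sub_iff by (auto simp: ldiv_Z3cx_iff)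
  have "1 \<in> r_rdiv Z3cx X Y \<longleftrightarrow> 2 \<in> r_rdiv Z3cx X Y"
    unfolding rdiv_Z3cx_iff ball_Z3[OF Y(1)] using X(2) Y(2) by (auto simp: Z3_def)
  then show "r_rdiv Z3cx X Y \<in> carrier Z3sub"
    unfolding carrier_Z3sub_iff by (auto simp: rdiv_Z3cx_iff)
qed

lemma residuated_lattice_Z3cx: "residuated_lattice Z3cx"
  by (subst Z3cx_eq) (rule residuated_lattice_Z3cx_on[OF Z3_subuniverse_Pow])

lemma residuated_lattice_Z3sub: "residuated_lattice Z3sub"
  by (subst Z3sub_eq) (rule residuated_lattice_Z3cx_on[OF Z3_subuniverse_Z3sub])

lemma residuation_algebra_Z3cx: "residuation_algebra (ra.truncate Z3cx)"
  unfolding residuation_algebra_truncate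
  by (subst Z3cx_eq) (rule residuation_algebra_Z3cx_on[OF Z3_subuniverse_Pow])

lemma residuation_algebra_Z3sub: "residuation_algebra (ra.truncate Z3sub)"
  unfolding residuation_algebra_truncate
  by (subst Z3sub_eq) (rule residuation_algebra_Z3cx_on[OF Z3_subuniverse_Z3sub])

lemma rl_substructure_Z3sub: "rl_substructure Z3sub Z3cx"
  using Z3_subuniverse_Z3sub
  unfolding rl_substructure_def ra_substructure_def Z3_subuniverse_def
  by (simp add: Z3sub_def Z3cx_def)

lemma dual_total_Z3cx: "dual_total Z3cx"
proof -
  let ?A = "Z3cx_on (Pow Z3)"
  have compl: "\<forall>X\<in>Pow Z3. Z3 - X \<in> Pow Z3" by blast
  have F: "finite_field_of_sets Z3 ?A"
    by (rule finite_field_of_sets_Z3cx_on[OF Z3_subuniverse_Pow compl])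
  then have L: "set_lattice Z3 ?A" and fin: "finite (carrier ?A)"
    unfolding finite_field_of_sets_def by blast+
  have atom: "emb ?A {x} = {point_filter ?A x}" if "x \<in> Z3" for x
    using emb_set_lattice[OF L fin] that by (simp add: Z3cx_on_simps)
  have "cprod ?A {point_filter ?A x} {point_filter ?A y} = {point_filter ?A ((x + y) mod 3)}"
    if "x \<in> Z3" "y \<in> Z3" for x y
    using cprod_Z3cx_on[OF Z3_subuniverse_Pow compl, of "{x}" "{y}"] that
    by (simp add: atom mod3_in_Z3 cplx_mult_singletons)
  then have "dual_total ?A"
    unfolding dual_total_def Jinf_field_of_sets[OF F] using mod3_in_Z3 by auto
  then show ?thesis by (subst Z3cx_eq)
qed

lemma not_dual_functional_Z3sub: "\<not> dual_functional Z3sub"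
proof -
  let ?A = "Z3cx_on (carrier Z3sub)"
  let ?P = "point_filter ?A"
  have compl: "\<forall>X\<in>carrier Z3sub. Z3 - X \<in> carrier Z3sub"
    by (auto simp: carrier_Z3sub_iff Z3_def)
  have F: "finite_field_of_sets Z3 ?A"
    by (rule finite_field_of_sets_Z3cx_on[OF Z3_subuniverse_Z3sub compl])
  then have L: "set_lattice Z3 ?A" and fin: "finite (carrier ?A)"
    unfolding finite_field_of_sets_def by blast+
  have in_carrier: "{1, 2} \<in> carrier Z3sub" "Z3 \<in> carrier Z3sub"
    unfolding carrier_Z3sub_iff Z3_def by auto
  have "?P 2 = ?P 1"
    unfolding point_filter_def Z3cx_on_simps carrier_Z3sub_iff by blast
  moreover have "?P 0 \<noteq> ?P 1"
  proof -
    have "{0} \<in> ?P 0" "{0} \<notin> ?P 1"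
      unfolding point_filter_def Z3cx_on_simps carrier_Z3sub_iff Z3_def by auto
    then show ?thesis by metis
  qed
  ultimately have emb12: "emb ?A {1, 2} = {?P 1}" and embZ3: "emb ?A Z3 = {?P 0, ?P 1}"
    using emb_set_lattice[OF L fin] in_carrier by (simp_all add: Z3cx_on_simps Z3_def)
  have "cplx_mult {1, 2} {1, 2} = Z3"
    unfolding set_eq_iff mem_cplx_mult Z3_def by auto
  then have "cprod ?A {?P 1} {?P 1} = {?P 0, ?P 1}"
    using cprod_Z3cx_on[OF Z3_subuniverse_Z3sub compl in_carrier(1) in_carrier(1)]
    by (simp add: emb12 embZ3)
  moreover have "{?P 1} \<in> Jinf ?A"
    unfolding Jinf_field_of_sets[OF F] Z3_def by blast
  moreover have "{?P 0, ?P 1} \<notin> Jinf ?A \<union> {{}}"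
    unfolding Jinf_field_of_sets[OF F] using \<open>?P 0 \<noteq> ?P 1\<close> by (auto simp: doubleton_eq_iff)
  ultimately have "\<not> dual_functional ?A"
    unfolding dual_functional_def by metis
  then show ?thesis using Z3sub_eq by metis
qed

theorem mainTheorem5:
  shows "(\<not> (\<exists>\<phi> :: rterm qf. \<forall>A :: int set ra.
              residuation_algebra A \<longrightarrow> (models_univ_r A \<phi> \<longleftrightarrow> dual_functional A)))
       \<and> (\<not> (\<exists>\<phi> :: lterm qf. \<forall>A :: int set rl.
              residuated_lattice A \<longrightarrow> (models_univ_l A \<phi> \<longleftrightarrow> dual_functional A)))
       \<and> residuated_lattice Z3cx \<and> dual_functional Z3cx \<and> dual_total Z3cx
       \<and> residuated_lattice Z3sub \<and> \<not> dual_functional Z3sub"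
proof -
  have functional: "dual_functional Z3cx"
    by (rule dual_total_imp_functional[OF dual_total_Z3cx])
  have ra_sub: "ra_substructure (ra.truncate Z3sub) (ra.truncate Z3cx)"
    using rl_substructure_Z3sub by (simp add: ra_substructure_truncate rl_substructure_def)
  have "\<not> (\<exists>\<phi> :: rterm qf. \<forall>A :: int set ra.
      residuation_algebra A \<longrightarrow> (models_univ_r A \<phi> \<longleftrightarrow> dual_functional A))"
    by (rule not_universally_definable_r[where K = residuation_algebra and P = dual_functional,
          OF residuation_algebra_Z3cx residuation_algebra_Z3sub ra_sub])
      (simp_all add: dual_functional_truncate functional not_dual_functional_Z3sub)
  moreover have "\<not> (\<exists>\<phi> :: lterm qf. \<forall>A :: int set rl.
      residuated_lattice A \<longrightarrow> (models_univ_l A \<phi> \<longleftrightarrow> dual_functional A))"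
    by (rule not_universally_definable_l[where K = residuated_lattice and P = dual_functional,
          OF residuated_lattice_Z3cx residuated_lattice_Z3sub rl_substructure_Z3sub
          functional not_dual_functional_Z3sub])
  ultimately show ?thesis
    using residuated_lattice_Z3cx residuated_lattice_Z3sub functional dual_total_Z3cx
      not_dual_functional_Z3sub by blast
qed

end
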